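(* Let $P$ be the uniform probability measure on $[0,1]$, $Q$ a probability measure on $[0,1]$ with unimodal density $r = dQ/dP$, maximiser $x^*$ and $r_{max} = \sup r<\infty$. For $\gamma\in[0,1]$ let $N(\gamma) = \min\{n : X_n \in S(\gamma)\}$ where $X_1,X_2,\dots$ are the samples of AS*. Then $$\mathbb{E}[N(\gamma)] \le \alpha\log\frac{1}{w(\gamma)} + 6, \qquad \alpha = \left(\log\tfrac43\right)^{-1}.$$
   Context: Unimodal: $r$ non-decreasing on $[0,x^*]$, non-increasing on $[x^*,1]$, $r(x^* ) = r_{max}$. $S(\gamma) = \{x\in[0,1] : r(x)\ge\gamma r_{max}\}$ and $w(\gamma) = \inf\{\delta\in[0,1] : \exists z\in[0,1],\ S(\gamma)\subseteq[z,z+\delta]\}$. $\mathrm{TG}(\mu,\kappa)$ is the unit-scale Gumbel with location $\mu$ truncated to $(-\infty,\kappa]$ (density $\propto \exp(-(g-\mu)-e^{-(g-\mu)})$ on $g\le\kappa$). AS*: $B_1=[0,1]$, $G_0=+\infty$; for every $n\ge1$ draw $G_n\sim\mathrm{TG}(\log P(B_n),G_{n-1})$ and independently $X_n\sim P(\cdot\cap B_n)/P(B_n)$; set $L_n=\max_{k\le n}(\log r(X_k)+G_k)$, $U_n=\log r_{max}+G_n$, and $B_{n+1}=[\max(\{0\}\cup\{X_k:k\le n,X_k\le x^*\}),\ \min(\{1\}\cup\{X_k:k\le n,X_k\ge x^*\})]$. These sequences are defined for all $n$; the algorithm's number of steps is $T=\min\{n\ge1: L_n\ge U_n\}$. *)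

theory Defs
  imports "HOL-Probability.Probability"
begin

definition unifP :: "real measure" where
  "unifP = uniform_measure lborel {0..1}"

definition Sset :: "(real \<Rightarrow> real) \<Rightarrow> real \<Rightarrow> real \<Rightarrow> real set" where
  "Sset r rmax \<gamma> = {x \<in> {0..1}. r x \<ge> \<gamma> * rmax}"

definition width :: "(real \<Rightarrow> real) \<Rightarrow> real \<Rightarrow> real \<Rightarrow> real" where
  "width r rmax \<gamma> = Inf {\<delta> \<in> {0..1}. \<exists>z \<in> {0..1}. Sset r rmax \<gamma> \<subseteq> {z..z+\<delta>}}"

text \<open>Current bracket B_{n+1} = [lo, hi] computed from the previous samples X_1..X_n.\<close>
definition lo_br :: "real \<Rightarrow> real list \<Rightarrow> real" where
  "lo_br xs hist = Max (insert 0 {x \<in> set hist. x \<le> xs})"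

definition hi_br :: "real \<Rightarrow> real list \<Rightarrow> real" where
  "hi_br xs hist = Min (insert 1 {x \<in> set hist. x \<ge> xs})"

text \<open>Samples of AS*: with u :: nat => real an i.i.d. Uniform[0,1] sequence,
  X_n = lo(B_n) + (hi(B_n) - lo(B_n)) * u n, which is distributed as P(. \<inter> B_n)/P(B_n).
  AS_hist xs u n = [X_1, ..., X_n].\<close>
fun AS_hist :: "real \<Rightarrow> (nat \<Rightarrow> real) \<Rightarrow> nat \<Rightarrow> real list" where
  "AS_hist xs u 0 = []"
| "AS_hist xs u (Suc n) =
     (let h = AS_hist xs u n
      in h @ [lo_br xs h + (hi_br xs h - lo_br xs h) * u (Suc n)])"

definition AS_X :: "real \<Rightarrow> (nat \<Rightarrow> real) \<Rightarrow> nat \<Rightarrow> real" where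
  "AS_X xs u n = AS_hist xs u n ! (n - 1)"   \<comment> \<open>meaningful for n \<ge> 1\<close>

definition AS_space :: "(nat \<Rightarrow> real) measure" where
  "AS_space = PiM UNIV (\<lambda>_. unifP)"

definition Nhit :: "real \<Rightarrow> real set \<Rightarrow> (nat \<Rightarrow> real) \<Rightarrow> ennreal" where
  "Nhit xs S u = (if \<exists>n\<ge>1. AS_X xs u n \<in> S
                  then of_nat (LEAST n. n \<ge> 1 \<and> AS_X xs u n \<in> S) else \<infinity>)"

end

theory Submission
  imports Defs
begin

text \<open>
  The samples of AS* do not depend on the Gumbel variables: each X_n is uniform on the current
  bracket B_n, a sample outside S(\<gamma>) replaces one endpoint of B_n by itself, and N(\<gamma>) counts
  the samples up to the first one inside S(\<gamma>). By unimodality S(\<gamma>) is an interval containing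
  x*, so a miss always lies beyond its hull [a, b] and B_n keeps enclosing [a, b], whose length
  D = b - a is at least w(\<gamma>). A bracket of length L gets the potential
  F(L) = \<alpha> log (L / D) + 6. If the sample falls at relative position t of a miss region, the
  bracket shrinks to length L (1 - t), and log (1 - t) \<le> -t - t^2/2 gives
  F(L (1 - t)) \<le> F(L) - \<alpha> (t + t^2/2). The miss regions have relative lengths A, B with
  A + B = 1 - D/L, and integrating this bound over them shows 1 + E F(new length) \<le> F(L), because
  F \<ge> 6 and \<alpha> \<ge> 24/7. By induction on k the potential bounds E min(N, k), and monotone
  convergence gives E N(\<gamma>) \<le> F(1) \<le> \<alpha> log (1/w(\<gamma>)) + 6.
\<close>

definition bracket_point :: "real \<times> real \<Rightarrow> real \<Rightarrow> real" where
  "bracket_point p t = fst p + (snd p - fst p) * t"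

definition bracket_length :: "real \<times> real \<Rightarrow> real" where
  "bracket_length p = snd p - fst p"

definition bracket_update :: "real \<Rightarrow> real \<times> real \<Rightarrow> real \<Rightarrow> real \<times> real" where
  "bracket_update xs p y =
     (if y \<le> xs then max (fst p) y else fst p, if xs \<le> y then min (snd p) y else snd p)"

fun bracket :: "real \<Rightarrow> real \<times> real \<Rightarrow> (nat \<Rightarrow> real) \<Rightarrow> nat \<Rightarrow> real \<times> real" where
  "bracket xs p v 0 = p"
| "bracket xs p v (Suc n) =
     bracket_update xs (bracket xs p v n) (bracket_point (bracket xs p v n) (v n))"

definition sample :: "real \<Rightarrow> real \<times> real \<Rightarrow> (nat \<Rightarrow> real) \<Rightarrow> nat \<Rightarrow> real" where
  "sample xs p v n = bracket_point (bracket xs p v n) (v n)"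

lemma bracket_Suc_shift:
  "bracket xs p v (Suc n) = bracket xs (bracket xs p v 1) (\<lambda>i. v (Suc i)) n"
  by (induction n) auto

lemma sample_Suc_shift:
  "sample xs p v (Suc n) = sample xs (bracket xs p v 1) (\<lambda>i. v (Suc i)) n"
  unfolding sample_def bracket_Suc_shift ..

lemma lo_hi_br_snoc:
  "(lo_br xs (h @ [y]), hi_br xs (h @ [y])) = bracket_update xs (lo_br xs h, hi_br xs h) y"
proof -
  have "insert 0 {x \<in> set (h @ [y]). x \<le> xs} =
      (if y \<le> xs then insert y else id) (insert 0 {x \<in> set h. x \<le> xs})"
    by auto
  moreover have "insert 1 {x \<in> set (h @ [y]). xs \<le> x} =
      (if xs \<le> y then insert y else id) (insert 1 {x \<in> set h. xs \<le> x})"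
    by auto
  ultimately show ?thesis
    by (simp add: lo_br_def hi_br_def bracket_update_def max.commute min.commute)
qed

lemma bracket_AS_hist:
  "(lo_br xs (AS_hist xs u n), hi_br xs (AS_hist xs u n)) = bracket xs (0, 1) (\<lambda>i. u (Suc i)) n"
proof (induction n)
  case 0
  show ?case by (simp add: lo_br_def hi_br_def)
next
  case (Suc n)
  show ?case
    by (simp add: Let_def lo_hi_br_snoc bracket_point_def flip: Suc.IH)
qed

lemma AS_X_eq_sample: "AS_X xs u (Suc n) = sample xs (0, 1) (\<lambda>i. u (Suc i)) n"
proof -
  have "length (AS_hist xs u n) = n"
    by (induction n) (simp_all add: Let_def)
  then show ?thesis
    using bracket_AS_hist[of xs u n, symmetric]
    by (simp add: AS_X_def Let_def sample_def bracket_point_def nth_append)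
qed

lemma measurable_bracket_update[measurable]:
  assumes [measurable]: "f \<in> M \<rightarrow>\<^sub>M borel \<Otimes>\<^sub>M borel" "g \<in> borel_measurable M"
  shows "(\<lambda>x. bracket_update xs (f x) (g x)) \<in> M \<rightarrow>\<^sub>M borel \<Otimes>\<^sub>M borel"
  unfolding bracket_update_def by measurable

lemma measurable_bracket_point[measurable]:
  assumes [measurable]: "f \<in> M \<rightarrow>\<^sub>M borel \<Otimes>\<^sub>M borel" "g \<in> borel_measurable M"
  shows "(\<lambda>x. bracket_point (f x) (g x)) \<in> borel_measurable M"
  unfolding bracket_point_def by measurable

lemma measurable_bracket[measurable]:
  assumes [measurable]: "\<And>i. (\<lambda>x. v x i) \<in> borel_measurable M"
  shows "(\<lambda>x. bracket xs p (v x) n) \<in> M \<rightarrow>\<^sub>M borel \<Otimes>\<^sub>M borel"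
  by (induction n) (simp_all add: space_pair_measure)

lemma measurable_sample[measurable]:
  assumes [measurable]: "\<And>i. (\<lambda>x. v x i) \<in> borel_measurable M"
  shows "(\<lambda>x. sample xs p (v x) n) \<in> borel_measurable M"
  unfolding sample_def by measurable

text \<open>min (N, k) for the search started from bracket p, written as a sum of indicators so that
  measurability is immediate.\<close>

definition truncated_hit_time ::
    "real \<Rightarrow> real set \<Rightarrow> nat \<Rightarrow> real \<times> real \<Rightarrow> (nat \<Rightarrow> real) \<Rightarrow> ennreal" where
  "truncated_hit_time xs S k p v = (\<Sum>n<k. if \<forall>m<n. sample xs p v m \<notin> S then 1 else 0)"

lemma truncated_hit_time_Suc:
  "truncated_hit_time xs S (Suc k) p v = 1 +
     (if sample xs p v 0 \<in> S then 0
      else truncated_hit_time xs S k (bracket xs p v 1) (\<lambda>i. v (Suc i)))"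
proof -
  have "(\<forall>m<Suc n. sample xs p v m \<notin> S) \<longleftrightarrow>
      sample xs p v 0 \<notin> S \<and> (\<forall>m<n. sample xs (bracket xs p v 1) (\<lambda>i. v (Suc i)) m \<notin> S)" for n
    by (simp add: All_less_Suc2 sample_Suc_shift)
  then show ?thesis
    unfolding truncated_hit_time_def sum.lessThan_Suc_shift by (simp add: sum.neutral)
qed

lemma truncated_hit_time_eq_of_nat:
  assumes "\<And>m. Suc m < k \<Longrightarrow> sample xs p v m \<notin> S"
  shows "truncated_hit_time xs S k p v = of_nat k"
  unfolding truncated_hit_time_def using assms
  by (subst sum.cong[OF refl, where h = "\<lambda>_. 1"]) auto

lemma Nhit_le_SUP_truncated_hit_time:
  "Nhit xs S u \<le> (SUP k. truncated_hit_time xs S k (0, 1) (\<lambda>i. u (Suc i)))"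
proof (cases "\<exists>n\<ge>1. AS_X xs u n \<in> S")
  case True
  define m where "m = (LEAST n. n \<ge> 1 \<and> AS_X xs u n \<in> S)"
  have "truncated_hit_time xs S m (0, 1) (\<lambda>i. u (Suc i)) = of_nat m"
  proof (rule truncated_hit_time_eq_of_nat)
    fix j assume "Suc j < m"
    then have "\<not> (Suc j \<ge> 1 \<and> AS_X xs u (Suc j) \<in> S)"
      unfolding m_def by (rule not_less_Least)
    then show "sample xs (0, 1) (\<lambda>i. u (Suc i)) j \<notin> S"
      by (simp add: AS_X_eq_sample)
  qed
  moreover have "Nhit xs S u = of_nat m"
    using True by (simp add: Nhit_def m_def)
  ultimately show ?thesis
    by (metis SUP_upper UNIV_I)
next
  case False
  then have "truncated_hit_time xs S k (0, 1) (\<lambda>i. u (Suc i)) = of_nat k" for k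
    by (intro truncated_hit_time_eq_of_nat) (auto simp: AS_X_eq_sample[symmetric])
  then show ?thesis
    using False by (simp add: Nhit_def ennreal_SUP_of_nat_eq_top)
qed

lemma sets_unifP[measurable_cong]: "sets unifP = sets borel"
  by (simp add: unifP_def)

lemma prob_space_unifP: "prob_space unifP"
  unfolding unifP_def by (rule prob_space_uniform_measure) auto

lemma prob_space_AS_space: "prob_space AS_space"
  unfolding AS_space_def by (intro prob_space_PiM prob_space_unifP)

lemma measurable_AS_space_component[measurable]: "(\<lambda>v. v n) \<in> borel_measurable AS_space"
proof -
  have "(\<lambda>v. v n) \<in> AS_space \<rightarrow>\<^sub>M unifP"
    unfolding AS_space_def by (rule measurable_component_singleton) simp
  then show ?thesis
    by (simp add: unifP_def cong: measurable_cong_sets)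
qed

lemma measurable_truncated_hit_time[measurable]:
  assumes [measurable]: "S \<in> sets borel"
  shows "truncated_hit_time xs S k p \<in> borel_measurable AS_space"
  unfolding truncated_hit_time_def by measurable

lemma nn_integral_AS_space_case_nat:
  assumes [measurable]: "f \<in> borel_measurable AS_space"
  shows "(\<integral>\<^sup>+ v. f v \<partial>AS_space) = (\<integral>\<^sup>+ s. \<integral>\<^sup>+ \<omega>. f (case_nat s \<omega>) \<partial>AS_space \<partial>unifP)"
proof -
  interpret prob_space unifP by (rule prob_space_unifP)
  interpret sequence_space unifP by unfold_locales
  interpret AS: prob_space AS_space by (rule prob_space_AS_space)
  have [measurable]: "(\<lambda>(s, \<omega>). case_nat s \<omega>) \<in> unifP \<Otimes>\<^sub>M AS_space \<rightarrow>\<^sub>M AS_space"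
    unfolding AS_space_def by measurable
  have "(\<integral>\<^sup>+ v. f v \<partial>AS_space)
      = (\<integral>\<^sup>+ v. f v \<partial>distr (unifP \<Otimes>\<^sub>M AS_space) AS_space (\<lambda>(s, \<omega>). case_nat s \<omega>))"
    by (simp add: AS_space_def PiM_iter)
  also have "\<dots> = (\<integral>\<^sup>+ s. \<integral>\<^sup>+ \<omega>. f (case_nat s \<omega>) \<partial>AS_space \<partial>unifP)"
    by (simp add: nn_integral_distr AS.nn_integral_fst[symmetric] split_beta')
  finally show ?thesis .
qed

lemma measurable_AS_space_shift: "(\<lambda>u i. u (Suc i)) \<in> AS_space \<rightarrow>\<^sub>M AS_space"
  unfolding AS_space_def
  by (intro measurable_PiM_single' measurable_component_singleton) (auto simp: space_PiM)

lemma nn_integral_AS_space_shift: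
  assumes [measurable]: "g \<in> borel_measurable AS_space"
  shows "(\<integral>\<^sup>+ u. g (\<lambda>i. u (Suc i)) \<partial>AS_space) = (\<integral>\<^sup>+ v. g v \<partial>AS_space)"
proof -
  interpret prob_space unifP by (rule prob_space_unifP)
  note measurable_AS_space_shift[measurable]
  have "(\<integral>\<^sup>+ u. g (\<lambda>i. u (Suc i)) \<partial>AS_space) = (\<integral>\<^sup>+ s. (\<integral>\<^sup>+ v. g v \<partial>AS_space) \<partial>unifP)"
    by (subst nn_integral_AS_space_case_nat) simp_all
  then show ?thesis
    by (simp add: emeasure_space_1)
qed

lemma nn_integral_truncated_hit_time_Suc:
  assumes [measurable]: "S \<in> sets borel"
  shows "(\<integral>\<^sup>+ v. truncated_hit_time xs S (Suc k) p v \<partial>AS_space) =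
    (\<integral>\<^sup>+ s. 1 + (if bracket_point p s \<in> S then 0
                  else \<integral>\<^sup>+ \<omega>. truncated_hit_time xs S k (bracket_update xs p (bracket_point p s)) \<omega>
                       \<partial>AS_space) \<partial>unifP)"
proof -
  interpret prob_space AS_space by (rule prob_space_AS_space)
  have "(\<integral>\<^sup>+ \<omega>. truncated_hit_time xs S (Suc k) p (case_nat s \<omega>) \<partial>AS_space) =
      1 + (if bracket_point p s \<in> S then 0
           else \<integral>\<^sup>+ \<omega>. truncated_hit_time xs S k (bracket_update xs p (bracket_point p s)) \<omega>
                \<partial>AS_space)" for s
    by (simp add: truncated_hit_time_Suc sample_def nn_integral_add emeasure_space_1)
  then show ?thesis
    by (simp add: nn_integral_AS_space_case_nat)
qed

lemma ln_one_minus_le: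
  fixes t :: real
  assumes "0 \<le> t" "t < 1"
  shows "ln (1 - t) \<le> - t - t\<^sup>2 / 2"
proof -
  let ?f = "\<lambda>x::real. ln (1 - x) + x + x\<^sup>2 / 2"
  have "?f t \<le> ?f 0"
  proof (rule deriv_nonpos_imp_antimono[where g = ?f and g' = "\<lambda>x. - x\<^sup>2 / (1 - x)"])
    fix x assume x: "x \<in> {0..t}"
    then have "x < 1" using assms by auto
    then show "(?f has_real_derivative - x\<^sup>2 / (1 - x)) (at x)"
      by (auto intro!: derivative_eq_intros simp: power2_eq_square field_simps)
    show "- x\<^sup>2 / (1 - x) \<le> 0"
      using \<open>x < 1\<close> by (intro divide_nonpos_pos) auto
  qed (use assms in auto)
  then show ?thesis by simp
qed

lemma cubic_deficits_lower_bound: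
  fixes A B \<delta> :: real
  assumes "0 \<le> A" "0 \<le> B" "0 \<le> \<delta>" "A + B = 1 - \<delta>"
  shows "1 \<le> 6 * \<delta> + 24/7 * ((A\<^sup>2/2 + A^3/6) + (B\<^sup>2/2 + B^3/6))"
proof -
  define e where "e = A + B"
  have "0 \<le> (A - B)\<^sup>2"
    by simp
  then have squares: "e\<^sup>2 / 2 \<le> A\<^sup>2 + B\<^sup>2"
    by (simp add: e_def power2_eq_square algebra_simps)
  have "0 \<le> (A + B) * (A - B)\<^sup>2"
    using assms by simp
  then have cubes: "e^3 / 4 \<le> A^3 + B^3"
    by (simp add: e_def power2_eq_square power3_eq_cube algebra_simps)
  have "0 \<le> e" "e \<le> 1"
    using assms by (simp_all add: e_def)
  then have "e\<^sup>2 \<le> 1"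
    by (simp add: power_le_one)
  \<comment> \<open>with these bounds the claim reduces to 0 \<le> 35 - 42 e + 6 e^2 + e^3, which factors:\<close>
  with \<open>e \<le> 1\<close> have "0 \<le> (1 - e) * (35 - 7 * e - e\<^sup>2)"
    by (intro mult_nonneg_nonneg) auto
  then show ?thesis
    using squares cubes assms(4)
    by (simp add: e_def[symmetric] power2_eq_square power3_eq_cube algebra_simps)
qed

lemma nn_integral_unifP:
  fixes f :: "real \<Rightarrow> ennreal"
  assumes "f \<in> borel_measurable borel"
  shows "(\<integral>\<^sup>+ x. f x \<partial>unifP) = (\<integral>\<^sup>+ x. f x * indicator {0..1} x \<partial>lborel)"
  using assms unfolding unifP_def
  by (subst nn_integral_uniform_measure) (auto simp: divide_ennreal_def)

lemma nn_integral_lborel_reflect: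
  fixes f :: "real \<Rightarrow> ennreal"
  assumes "f \<in> borel_measurable borel"
  shows "(\<integral>\<^sup>+ x. f (1 - x) \<partial>lborel) = (\<integral>\<^sup>+ x. f x \<partial>lborel)"
  using nn_integral_real_affine[OF assms, of "-1" 1] by simp

lemma nn_integral_quadratic_deficit:
  fixes \<alpha> C A :: real
  assumes "0 \<le> A" and "\<And>t. t \<in> {0..A} \<Longrightarrow> \<alpha> * (t + t\<^sup>2/2) \<le> C"
  shows "(\<integral>\<^sup>+ t. ennreal (C - \<alpha> * (t + t\<^sup>2/2)) * indicator {0..A} t \<partial>lborel)
    = ennreal (A * C - \<alpha> * (A\<^sup>2/2 + A^3/6))"
  by (subst nn_integral_FTC_Icc[where F = "\<lambda>t. C * t - \<alpha> * (t\<^sup>2/2 + t^3/6)"])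
     (use assms in \<open>auto intro!: derivative_eq_intros simp: power2_eq_square field_simps\<close>)

lemma integral_quadratic_deficit_nonneg:
  fixes \<alpha> C A :: real
  assumes "0 \<le> A" "0 \<le> \<alpha>" "\<alpha> * (A + A\<^sup>2/2) \<le> C"
  shows "0 \<le> A * C - \<alpha> * (A\<^sup>2/2 + A^3/6)"
proof -
  have "0 \<le> A * (A * \<alpha>)" "0 \<le> A * (A * (A * \<alpha>))"
    using assms by simp_all
  then have "\<alpha> * (A\<^sup>2/2 + A^3/6) \<le> A * (\<alpha> * (A + A\<^sup>2/2))"
    by (simp add: power2_eq_square power3_eq_cube algebra_simps)
  also have "\<dots> \<le> A * C"
    using assms by (intro mult_left_mono)
  finally show ?thesis by simp
qed

lemma nn_integral_unifP_two_deficits: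
  fixes \<alpha> C A B :: real
  assumes A: "0 \<le> A" "A \<le> 1" and B: "0 \<le> B" "B \<le> 1" and "0 \<le> \<alpha>"
    and deficit_nonneg: "\<And>t. t \<in> {0..max A B} \<Longrightarrow> \<alpha> * (t + t\<^sup>2/2) \<le> C"
  shows "(\<integral>\<^sup>+ s. 1 + ennreal (C - \<alpha> * (s + s\<^sup>2/2)) * indicator {0..A} s
                + ennreal (C - \<alpha> * ((1 - s) + (1 - s)\<^sup>2/2)) * indicator {1-B..1} s \<partial>unifP)
    = ennreal (1 + (A * C - \<alpha> * (A\<^sup>2/2 + A^3/6)) + (B * C - \<alpha> * (B\<^sup>2/2 + B^3/6)))"
proof -
  interpret prob_space unifP by (rule prob_space_unifP)
  define d :: "real \<Rightarrow> real \<Rightarrow> ennreal"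
    where "d a t = ennreal (C - \<alpha> * (t + t\<^sup>2/2)) * indicator {0..a} t" for a t
  have [measurable]: "d a \<in> borel_measurable borel" "(\<lambda>t. d a (1 - t)) \<in> borel_measurable borel"
    for a
    unfolding d_def by measurable
  then have [measurable]:
      "d a \<in> borel_measurable unifP" "(\<lambda>t. d a (1 - t)) \<in> borel_measurable unifP" for a
    by (simp_all add: measurable_cong_sets[OF sets_unifP refl])
  have "d a t * indicator {0..1} t = d a t" "d a (1 - t) * indicator {0..1} t = d a (1 - t)"
    if "a \<le> 1" for a t
    using that by (auto simp: d_def split: split_indicator)
  then have unifP_eq_lborel: "(\<integral>\<^sup>+ t. d a t \<partial>unifP) = (\<integral>\<^sup>+ t. d a t \<partial>lborel)"
      "(\<integral>\<^sup>+ t. d a (1 - t) \<partial>unifP) = (\<integral>\<^sup>+ t. d a t \<partial>lborel)"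
    if "a \<le> 1" for a
    using that by (simp_all add: nn_integral_unifP nn_integral_lborel_reflect)
  have integral_d: "(\<integral>\<^sup>+ t. d a t \<partial>lborel) = ennreal (a * C - \<alpha> * (a\<^sup>2/2 + a^3/6))"
    if "0 \<le> a" "a \<le> max A B" for a
    unfolding d_def using that deficit_nonneg by (intro nn_integral_quadratic_deficit) auto
  have "ennreal (C - \<alpha> * ((1 - s) + (1 - s)\<^sup>2/2)) * indicator {1-B..1} s = d B (1 - s)" for s
    by (auto simp: d_def split: split_indicator)
  moreover have "(\<integral>\<^sup>+ s. 1 + d A s + d B (1 - s) \<partial>unifP)
      = (\<integral>\<^sup>+ s. 1 + d A s \<partial>unifP) + (\<integral>\<^sup>+ s. d B (1 - s) \<partial>unifP)"
    by (rule nn_integral_add) measurable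
  moreover have "(\<integral>\<^sup>+ s. 1 + d A s \<partial>unifP) = 1 + (\<integral>\<^sup>+ s. d A s \<partial>unifP)"
    by (subst nn_integral_add) (measurable, simp add: emeasure_space_1)
  moreover have "0 \<le> a * C - \<alpha> * (a\<^sup>2/2 + a^3/6)" if "a \<in> {A, B}" for a
    using that A B \<open>0 \<le> \<alpha>\<close> deficit_nonneg[of a]
    by (intro integral_quadratic_deficit_nonneg) auto
  ultimately show ?thesis
    using A B by (simp add: unifP_eq_lborel integral_d flip: d_def)
qed

lemma one_plus_deficits_le:
  fixes A B \<delta> \<alpha> C :: real
  assumes "0 \<le> A" "0 \<le> B" "0 \<le> \<delta>" "A + B = 1 - \<delta>" "6 \<le> C" "24/7 \<le> \<alpha>"
  shows "1 + (A * C - \<alpha> * (A\<^sup>2/2 + A^3/6)) + (B * C - \<alpha> * (B\<^sup>2/2 + B^3/6)) \<le> C"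
proof -
  let ?q = "(A\<^sup>2/2 + A^3/6) + (B\<^sup>2/2 + B^3/6)"
  have "6 * \<delta> \<le> C * \<delta>"
    using assms by (intro mult_right_mono) auto
  moreover have "24/7 * ?q \<le> \<alpha> * ?q"
    using assms by (intro mult_right_mono) auto
  moreover have "A * C + B * C = (1 - \<delta>) * C"
    using assms(4) by (metis distrib_right)
  ultimately show ?thesis
    using cubic_deficits_lower_bound[OF assms(1-4)] by (simp add: algebra_simps)
qed

definition potential_slope :: real where
  "potential_slope = 1 / ln (4/3)"

lemma potential_slope_ge: "24/7 \<le> potential_slope"
proof -
  have "4 / 3 \<le> 1 + 7/24 + (7/24)\<^sup>2 / (2::real)"
    by (simp add: power2_eq_square)
  also have "\<dots> \<le> exp (7/24)"
    by (rule exp_lower_Taylor_quadratic) simp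
  finally have "ln (4/3) \<le> ln (exp (7/24 :: real))"
    by (rule ln_mono) simp
  then show ?thesis
    by (simp add: potential_slope_def field_simps)
qed

text \<open>S stands for S(\<gamma>) and xs for the mode x*; nothing else about S(\<gamma>) is used.\<close>

locale interval_target =
  fixes S :: "real set" and xs :: real
  assumes is_interval_S: "is_interval S"
    and S_subset: "S \<subseteq> {0..1}"
    and xs_mem: "xs \<in> S"
    and Inf_less_Sup: "Inf S < Sup S"
begin

definition target_length :: real where
  "target_length = Sup S - Inf S"

definition potential :: "real \<Rightarrow> real" where
  "potential L = potential_slope * ln (L / target_length) + 6"

definition shrink_bound :: "real \<Rightarrow> real \<Rightarrow> real" where
  "shrink_bound L t = potential L - potential_slope * (t + t\<^sup>2/2)"

definition encloses :: "real \<times> real \<Rightarrow> bool" where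
  "encloses p \<longleftrightarrow> fst p \<le> Inf S \<and> Sup S \<le> snd p"

definition left_gap :: "real \<times> real \<Rightarrow> real" where
  "left_gap p = (Inf S - fst p) / bracket_length p"

definition right_gap :: "real \<times> real \<Rightarrow> real" where
  "right_gap p = (snd p - Sup S) / bracket_length p"

text \<open>A sample at relative position s of bracket p misses S on the left for s in [0, left_gap p]
  and on the right for s in [1 - right_gap p, 1].\<close>

definition step_bound :: "real \<times> real \<Rightarrow> real \<Rightarrow> ennreal" where
  "step_bound p s = 1
     + ennreal (shrink_bound (bracket_length p) s) * indicator {0..left_gap p} s
     + ennreal (shrink_bound (bracket_length p) (1 - s)) * indicator {1 - right_gap p..1} s"

lemma sets_S[measurable]: "S \<in> sets borel"
  using is_interval_S by (rule real_interval_borel_measurable)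

lemma bdd_S: "bdd_below S" "bdd_above S"
  using S_subset by (auto intro!: bdd_belowI[of _ 0] bdd_aboveI[of _ 1])

lemma miss_le_mode_imp_le_Inf:
  assumes "y \<notin> S" "y \<le> xs" shows "y \<le> Inf S"
proof (rule ccontr)
  assume "\<not> y \<le> Inf S"
  then obtain s where "s \<in> S" "s < y"
    using cInf_less_iff[OF _ bdd_S(1)] xs_mem by (auto simp: not_le)
  then have "y \<in> S"
    using assms(2) xs_mem is_interval_S unfolding is_interval_1 by (meson less_imp_le)
  then show False
    using assms(1) by simp
qed

lemma miss_ge_mode_imp_Sup_le:
  assumes "y \<notin> S" "xs \<le> y" shows "Sup S \<le> y"
proof (rule ccontr)
  assume "\<not> Sup S \<le> y"
  then obtain s where "s \<in> S" "y < s"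
    using less_cSup_iff[OF _ bdd_S(2)] xs_mem by (auto simp: not_le)
  then have "y \<in> S"
    using assms(2) xs_mem is_interval_S unfolding is_interval_1 by (meson less_imp_le)
  then show False
    using assms(1) by simp
qed

lemma target_length_pos: "0 < target_length"
  using Inf_less_Sup by (simp add: target_length_def)

lemma encloses_imp_target_length_le: "encloses p \<Longrightarrow> target_length \<le> bracket_length p"
  by (simp add: encloses_def target_length_def bracket_length_def)

lemma encloses_unit_interval: "encloses (0, 1)"
proof -
  have "S \<noteq> {}"
    using xs_mem by auto
  then show ?thesis
    using S_subset by (auto simp: encloses_def intro!: cInf_greatest cSup_least)
qed

lemma six_le_potential: "target_length \<le> L \<Longrightarrow> 6 \<le> potential L"
  using potential_slope_ge target_length_pos by (simp add: potential_def)

lemma potential_shrink: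
  assumes "0 < L" "0 \<le> t" "target_length \<le> L * (1 - t)"
  shows "potential (L * (1 - t)) \<le> shrink_bound L t"
proof -
  have "t < 1"
    using assms target_length_pos mult_nonneg_nonpos[of L "1 - t"] by linarith
  then have "ln (L * (1 - t) / target_length) = ln (L / target_length) + ln (1 - t)"
    using assms target_length_pos by (simp add: ln_div ln_mult)
  moreover have "potential_slope * ln (1 - t) \<le> potential_slope * (- t - t\<^sup>2/2)"
    using ln_one_minus_le[OF \<open>0 \<le> t\<close> \<open>t < 1\<close>] potential_slope_ge by (intro mult_left_mono) auto
  ultimately show ?thesis
    by (simp add: shrink_bound_def potential_def algebra_simps)
qed

lemma encloses_gaps:
  assumes "encloses p"
  shows "0 \<le> left_gap p" "0 \<le> right_gap p"
    and "left_gap p + right_gap p = 1 - target_length / bracket_length p"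
proof -
  have L: "0 < bracket_length p"
    using target_length_pos encloses_imp_target_length_le[OF assms] by simp
  then show "0 \<le> left_gap p" "0 \<le> right_gap p"
    using assms by (auto simp: encloses_def left_gap_def right_gap_def)
  have "left_gap p + right_gap p = (bracket_length p - target_length) / bracket_length p"
    by (simp add: left_gap_def right_gap_def bracket_length_def target_length_def
        add_divide_distrib[symmetric])
  then show "left_gap p + right_gap p = 1 - target_length / bracket_length p"
    using L by (simp add: diff_divide_distrib)
qed

lemma nn_integral_step_bound:
  assumes "encloses p"
  shows "(\<integral>\<^sup>+ s. step_bound p s \<partial>unifP) \<le> ennreal (potential (bracket_length p))"
proof -
  define L where "L = bracket_length p"
  define A where "A = left_gap p"
  define B where "B = right_gap p"
  have L: "target_length \<le> L" "0 < L" "0 < target_length / L"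
    using target_length_pos encloses_imp_target_length_le[OF assms] by (auto simp: L_def)
  have AB: "0 \<le> A" "0 \<le> B" "A + B = 1 - target_length / L"
    using encloses_gaps[OF assms] by (simp_all add: A_def B_def L_def)
  then have AB_le: "A \<le> 1" "B \<le> 1" "max A B \<le> 1 - target_length / L"
    using L by auto
  have "potential_slope * (t + t\<^sup>2/2) \<le> potential L" if "t \<in> {0..max A B}" for t
  proof -
    have "L * t \<le> L * (1 - target_length / L)"
      using that AB_le(3) L by (intro mult_left_mono) auto
    then have "target_length \<le> L * (1 - t)"
      using L by (simp add: right_diff_distrib)
    then show ?thesis
      using potential_shrink[OF \<open>0 < L\<close>, of t] six_le_potential[of "L * (1 - t)"] that
      by (simp add: shrink_bound_def)
  qed
  then have "(\<integral>\<^sup>+ s. step_bound p s \<partial>unifP)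
      = ennreal (1 + (A * potential L - potential_slope * (A\<^sup>2/2 + A^3/6))
                   + (B * potential L - potential_slope * (B\<^sup>2/2 + B^3/6)))"
    unfolding step_bound_def shrink_bound_def L_def[symmetric] A_def[symmetric] B_def[symmetric]
    using AB AB_le potential_slope_ge by (intro nn_integral_unifP_two_deficits) auto
  also have "\<dots> \<le> ennreal (potential L)"
    using AB L six_le_potential potential_slope_ge
    by (intro ennreal_leI one_plus_deficits_le) auto
  finally show ?thesis
    by (simp add: L_def)
qed

lemma bracket_update_miss:
  assumes p: "encloses p" and s: "s \<in> {0..1}" and miss: "bracket_point p s \<notin> S"
  defines "q \<equiv> bracket_update xs p (bracket_point p s)"
  shows "encloses q"
    and "bracket_point p s \<le> xs \<Longrightarrow> s \<le> left_gap p \<and> bracket_length q = bracket_length p * (1 - s)"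
    and "\<not> bracket_point p s \<le> xs \<Longrightarrow>
      1 - right_gap p \<le> s \<and> bracket_length q = bracket_length p * (1 - (1 - s))"
proof -
  define y where "y = bracket_point p s"
  define L where "L = bracket_length p"
  have "0 < L"
    using target_length_pos encloses_imp_target_length_le[OF p] by (simp add: L_def)
  have "0 \<le> L * s" "L * s \<le> L"
    using s \<open>0 < L\<close> by (simp_all add: mult_left_le)
  then have y: "y = fst p + L * s" "fst p \<le> y" "y \<le> snd p"
    by (auto simp: y_def bracket_point_def L_def bracket_length_def)
  have "y \<noteq> xs"
    using miss xs_mem by (auto simp: y_def)
  then have q: "q = (if y \<le> xs then (y, snd p) else (fst p, y))"
    using y by (auto simp: q_def y_def bracket_update_def)
  show "encloses q"
    using p y \<open>y \<noteq> xs\<close> miss miss_le_mode_imp_le_Inf miss_ge_mode_imp_Sup_le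
    unfolding q by (auto simp: encloses_def y_def)
  show "s \<le> left_gap p \<and> bracket_length q = L * (1 - s)" if "bracket_point p s \<le> xs"
    using miss_le_mode_imp_le_Inf[OF miss that] that \<open>0 < L\<close> y(1)
    by (auto simp: q y_def left_gap_def bracket_length_def L_def field_simps)
  show "1 - right_gap p \<le> s \<and> bracket_length q = L * (1 - (1 - s))" if "\<not> bracket_point p s \<le> xs"
    using miss_ge_mode_imp_Sup_le[OF miss] that \<open>0 < L\<close> y(1)
    by (auto simp: q y_def right_gap_def bracket_length_def L_def field_simps)
qed

lemma step_le_step_bound:
  fixes E :: "real \<times> real \<Rightarrow> ennreal"
  assumes E: "\<And>q. encloses q \<Longrightarrow> E q \<le> ennreal (potential (bracket_length q))"
    and p: "encloses p" and s: "s \<in> {0..1}"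
  shows "1 + (if bracket_point p s \<in> S then 0 else E (bracket_update xs p (bracket_point p s)))
    \<le> step_bound p s"
proof (cases "bracket_point p s \<in> S")
  case True
  then show ?thesis
    by (simp add: step_bound_def add.assoc)
next
  case miss: False
  define L where "L = bracket_length p"
  let ?q = "bracket_update xs p (bracket_point p s)"
  have "0 < L"
    using target_length_pos encloses_imp_target_length_le[OF p] by (simp add: L_def)
  have q: "encloses ?q"
    by (rule bracket_update_miss(1)[OF p s miss])
  have E_le: "E ?q \<le> ennreal (shrink_bound L t)" if "bracket_length ?q = L * (1 - t)" "0 \<le> t" for t
    using E[OF q] encloses_imp_target_length_le[OF q] potential_shrink[OF \<open>0 < L\<close> that(2)] that
    by (auto intro: order_trans ennreal_leI)
  have "E ?q \<le> ennreal (shrink_bound L s) * indicator {0..left_gap p} s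
      + ennreal (shrink_bound L (1 - s)) * indicator {1 - right_gap p..1} s"
  proof (cases "bracket_point p s \<le> xs")
    case True
    then show ?thesis
      using bracket_update_miss(2)[OF p s miss] E_le[of s] s
      by (auto simp: L_def intro: add_increasing2)
  next
    case False
    then show ?thesis
      using bracket_update_miss(3)[OF p s miss] E_le[of "1 - s"] s
      by (auto simp: L_def intro: add_increasing)
  qed
  then show ?thesis
    using miss by (simp add: step_bound_def add.assoc L_def)
qed

lemma AE_unifP_unit_interval: "AE s in unifP. s \<in> {0..1}"
  unfolding unifP_def by (rule AE_uniform_measureI) auto

lemma nn_integral_truncated_hit_time_le_potential:
  "encloses p \<Longrightarrow>
    (\<integral>\<^sup>+ v. truncated_hit_time xs S k p v \<partial>AS_space) \<le> ennreal (potential (bracket_length p))"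
proof (induction k arbitrary: p)
  case 0
  then show ?case
    by (simp add: truncated_hit_time_def)
next
  case (Suc k)
  have "(\<integral>\<^sup>+ v. truncated_hit_time xs S (Suc k) p v \<partial>AS_space)
      = (\<integral>\<^sup>+ s. 1 + (if bracket_point p s \<in> S then 0
                    else \<integral>\<^sup>+ \<omega>. truncated_hit_time xs S k (bracket_update xs p (bracket_point p s)) \<omega>
                         \<partial>AS_space) \<partial>unifP)"
    by (rule nn_integral_truncated_hit_time_Suc) (rule sets_S)
  also have "\<dots> \<le> (\<integral>\<^sup>+ s. step_bound p s \<partial>unifP)"
    using AE_unifP_unit_interval
    by (intro nn_integral_mono_AE)
       (elim AE_mp, intro AE_I2 impI step_le_step_bound[OF Suc.IH Suc.prems])
  also have "\<dots> \<le> ennreal (potential (bracket_length p))"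
    by (rule nn_integral_step_bound[OF Suc.prems])
  finally show ?case .
qed

theorem nn_integral_Nhit_le_potential:
  "(\<integral>\<^sup>+ u. Nhit xs S u \<partial>AS_space) \<le> ennreal (potential 1)"
proof -
  let ?T = "\<lambda>k u. truncated_hit_time xs S k (0, 1) (\<lambda>i. u (Suc i))"
  have "incseq ?T"
    by (intro incseq_SucI le_funI) (simp add: truncated_hit_time_def)
  moreover have "?T k \<in> borel_measurable AS_space" for k
    using measurable_AS_space_shift measurable_truncated_hit_time[OF sets_S]
    by (rule measurable_compose)
  ultimately have monotone_convergence:
    "(\<integral>\<^sup>+ u. (SUP k. ?T k u) \<partial>AS_space) = (SUP k. \<integral>\<^sup>+ u. ?T k u \<partial>AS_space)"
    by (simp add: nn_integral_monotone_convergence_SUP image_comp)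
  have "(\<integral>\<^sup>+ u. Nhit xs S u \<partial>AS_space) \<le> (\<integral>\<^sup>+ u. (SUP k. ?T k u) \<partial>AS_space)"
    by (intro nn_integral_mono Nhit_le_SUP_truncated_hit_time)
  also have "\<dots> = (SUP k. \<integral>\<^sup>+ u. ?T k u \<partial>AS_space)"
    by (rule monotone_convergence)
  also have "\<dots> = (SUP k. \<integral>\<^sup>+ v. truncated_hit_time xs S k (0, 1) v \<partial>AS_space)"
    using nn_integral_AS_space_shift[OF measurable_truncated_hit_time[OF sets_S]]
    by (intro SUP_cong) auto
  also have "\<dots> \<le> ennreal (potential 1)"
    using nn_integral_truncated_hit_time_le_potential[OF encloses_unit_interval]
    unfolding bracket_length_def prod.sel diff_zero by (rule SUP_least)
  finally show ?thesis .
qed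

end

lemma is_interval_Sset:
  assumes "mono_on {0..xs} r" "monotone_on {xs..1} (\<le>) (\<ge>) r"
  shows "is_interval (Sset r rmax \<gamma>)"
  unfolding is_interval_1
proof (intro ballI allI impI)
  fix a b x assume ab: "a \<in> Sset r rmax \<gamma>" "b \<in> Sset r rmax \<gamma>" and x: "a \<le> x \<and> x \<le> b"
  have "r a \<le> r x \<or> r b \<le> r x"
  proof (cases "x \<le> xs")
    case True
    then show ?thesis
      using ab x by (auto simp: Sset_def intro!: mono_onD[OF assms(1)])
  next
    case False
    then show ?thesis
      using ab x by (auto simp: Sset_def intro!: monotone_onD[OF assms(2)])
  qed
  then show "x \<in> Sset r rmax \<gamma>"
    using ab x by (auto simp: Sset_def)
qed

lemma width_le_Sup_minus_Inf:
  assumes "Sset r rmax \<gamma> \<noteq> {}"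
  shows "0 \<le> width r rmax \<gamma>"
    and "width r rmax \<gamma> \<le> Sup (Sset r rmax \<gamma>) - Inf (Sset r rmax \<gamma>)"
proof -
  let ?S = "Sset r rmax \<gamma>"
  let ?W = "{\<delta> \<in> {0..1}. \<exists>z \<in> {0..1}. ?S \<subseteq> {z..z+\<delta>}}"
  have S: "?S \<subseteq> {0..1}" "bdd_below ?S" "bdd_above ?S"
    by (auto simp: Sset_def bdd_below_def bdd_above_def)
  have "0 \<le> Inf ?S" "Sup ?S \<le> 1"
    using S assms by (auto intro!: cInf_greatest cSup_least)
  moreover have "Inf ?S \<le> Sup ?S" "?S \<subseteq> {Inf ?S..Sup ?S}"
    using S assms by (auto intro: cInf_le_cSup cInf_lower cSup_upper)
  ultimately have "Sup ?S - Inf ?S \<in> ?W"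
    by (auto intro!: bexI[of _ "Inf ?S"])
  then show "0 \<le> width r rmax \<gamma>" "width r rmax \<gamma> \<le> Sup ?S - Inf ?S"
    unfolding width_def by (auto intro!: cInf_greatest cInf_lower bdd_belowI[of _ 0])
qed

theorem mainTheorem5:
  fixes r :: "real \<Rightarrow> real" and Q :: "real measure" and xs rmax \<gamma> :: real
  assumes Q_prob: "prob_space Q"
    and Q_dens: "Q = density unifP (\<lambda>x. ennreal (r x))"
    and r_meas: "r \<in> borel_measurable borel"
    and r_nonneg: "\<forall>x\<in>{0..1}. r x \<ge> 0"
    and xs_in: "xs \<in> {0..1}"
    and r_up: "mono_on {0..xs} r"
    and r_down: "monotone_on {xs..1} (\<le>) (\<ge>) r"
    and r_max: "rmax = r xs"
    and \<gamma>_in: "\<gamma> \<in> {0..1}"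
  shows "(\<integral>\<^sup>+ u. Nhit xs (Sset r rmax \<gamma>) u \<partial>AS_space)
           \<le> (if width r rmax \<gamma> = 0 then \<infinity>
              else ennreal ((1 / ln (4/3)) * ln (1 / width r rmax \<gamma>) + 6))"
proof (cases "width r rmax \<gamma> = 0")
  case False
  let ?S = "Sset r rmax \<gamma>"
  have "\<gamma> * rmax \<le> rmax"
    using r_nonneg xs_in r_max \<gamma>_in by (simp add: mult_left_le_one_le)
  then have "xs \<in> ?S"
    using xs_in r_max by (simp add: Sset_def)
  with False width_le_Sup_minus_Inf[of r rmax \<gamma>]
  have w: "0 < width r rmax \<gamma>" "width r rmax \<gamma> \<le> Sup ?S - Inf ?S"
    by fastforce+
  interpret interval_target ?S xs
    using is_interval_Sset[OF r_up r_down] \<open>xs \<in> ?S\<close> w by unfold_locales (auto simp: Sset_def)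
  have "ln (1 / target_length) \<le> ln (1 / width r rmax \<gamma>)"
    using w by (simp add: target_length_def frac_le)
  then have "potential 1 \<le> (1 / ln (4/3)) * ln (1 / width r rmax \<gamma>) + 6"
    by (simp add: potential_def potential_slope_def divide_right_mono)
  then show ?thesis
    using nn_integral_Nhit_le_potential False by (auto intro: order_trans ennreal_leI)
qed simp

end
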